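(* Let $\rho_1,\rho_2$ be two rank-two density operators on $\mathbb{C}^2\otimes\mathbb{C}^2$ with orthogonal supports. Then the following are equivalent: (a) $\rho_1,\rho_2$ can be perfectly distinguished by a separable POVM; (b) $\rho_1,\rho_2$ can be perfectly distinguished by LOCC; (c) the orthogonal projectors onto the supports of $\rho_1$ and of $\rho_2$ are both separable.
   Context: A positive semidefinite operator on $\mathbb{C}^2\otimes\mathbb{C}^2$ is separable if it is a nonnegative linear combination of product projectors $|a\rangle\langle a|\otimes|b\rangle\langle b|$; a POVM is separable if all its elements are separable. LOCC means measurements implementable by local operations on each qubit and classical communication between the two parties. A POVM $\{\Pi_1,\Pi_2\}$ perfectly distinguishes $\rho_1,\rho_2$ if $\mathrm{tr}(\Pi_i\rho_j)=\delta_{ij}$. *)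

theory Defs
  imports "HOL-Analysis.Analysis"
begin

type_synonym qvec = "complex^2"
type_synonym qop = "complex^2^2"
type_synonym qqvec = "complex^(2 \<times> 2)"
type_synonym qqop = "complex^(2 \<times> 2)^(2 \<times> 2)"

definition adj :: "complex^'n^'n \<Rightarrow> complex^'n^'n" where
  "adj A = (\<chi> i j. cnj (A $ j $ i))"

definition mtrace :: "complex^'n^'n \<Rightarrow> complex" where
  "mtrace A = (\<Sum>i\<in>UNIV. A $ i $ i)"

definition cinn :: "complex^'n \<Rightarrow> complex^'n \<Rightarrow> complex" where
  "cinn x y = (\<Sum>i\<in>UNIV. cnj (x $ i) * y $ i)"

definition psd :: "complex^'n^'n \<Rightarrow> bool" where
  "psd A = (\<forall>v. Im (cinn v (A *v v)) = 0 \<and> 0 \<le> Re (cinn v (A *v v)))"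

definition density :: "complex^'n^'n \<Rightarrow> bool" where
  "density \<rho> = (psd \<rho> \<and> mtrace \<rho> = 1)"

definition support :: "complex^'n^'n \<Rightarrow> (complex^'n) set" where
  "support A = range (\<lambda>v. A *v v)"

definition orth_proj_onto :: "complex^'n^'n \<Rightarrow> (complex^'n) set \<Rightarrow> bool" where
  "orth_proj_onto P S = (adj P = P \<and> P ** P = P \<and> support P = S)"

definition outer :: "complex^'n \<Rightarrow> complex^'n^'n" where
  "outer v = (\<chi> i j. v $ i * cnj (v $ j))"

definition tensor :: "complex^'a^'a \<Rightarrow> complex^'b^'b \<Rightarrow> complex^('a \<times> 'b)^('a \<times> 'b)" where
  "tensor A B = (\<chi> p q. A $ fst p $ fst q * B $ snd p $ snd q)"

definition separable :: "qqop \<Rightarrow> bool" where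
  "separable A = (\<exists>(n::nat) (c::nat \<Rightarrow> real) (a::nat \<Rightarrow> qvec) (b::nat \<Rightarrow> qvec).
      (\<forall>k<n. 0 \<le> c k \<and> norm (a k) = 1 \<and> norm (b k) = 1) \<and>
      A = (\<Sum>k<n. c k *\<^sub>R tensor (outer (a k)) (outer (b k))))"

definition povm2 :: "qqop \<Rightarrow> qqop \<Rightarrow> bool" where
  "povm2 P1 P2 = (psd P1 \<and> psd P2 \<and> P1 + P2 = mat 1)"

definition sep_povm2 :: "qqop \<Rightarrow> qqop \<Rightarrow> bool" where
  "sep_povm2 P1 P2 = (povm2 P1 P2 \<and> separable P1 \<and> separable P2)"

definition perfectly_distinguishes :: "qqop \<Rightarrow> qqop \<Rightarrow> qqop \<Rightarrow> qqop \<Rightarrow> bool" where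
  "perfectly_distinguishes P1 P2 \<rho>1 \<rho>2 =
     (mtrace (P1 ** \<rho>1) = 1 \<and> mtrace (P1 ** \<rho>2) = 0 \<and>
      mtrace (P2 ** \<rho>1) = 0 \<and> mtrace (P2 ** \<rho>2) = 1)"

definition local_instrument :: "qop list \<Rightarrow> bool" where
  "local_instrument Ms = ((\<Sum>m\<leftarrow>Ms. adj m ** m) = mat 1)"

text \<open>Kraus operators of the overall instruments realisable by finitely many rounds of
  local operations and classical communication: in each round, conditioned on all earlier
  outcomes (the branch j), Alice or Bob performs a local measurement.\<close>
inductive locc_kraus :: "qqop list \<Rightarrow> bool" where
  start: "locc_kraus [mat 1]"
| alice: "\<lbrakk> locc_kraus Ks; length Ms = length Ks; \<forall>j<length Ks. local_instrument (Ms ! j) \<rbrakk>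
          \<Longrightarrow> locc_kraus (concat (map (\<lambda>j. map (\<lambda>m. tensor m (mat 1) ** (Ks ! j)) (Ms ! j))
                                         [0..<length Ks]))"
| bob: "\<lbrakk> locc_kraus Ks; length Ms = length Ks; \<forall>j<length Ks. local_instrument (Ms ! j) \<rbrakk>
          \<Longrightarrow> locc_kraus (concat (map (\<lambda>j. map (\<lambda>m. tensor (mat 1) m ** (Ks ! j)) (Ms ! j))
                                         [0..<length Ks]))"

text \<open>a two-outcome POVM implementable by LOCC: the final outcomes of an LOCC protocol are
  grouped into the two answers\<close>
definition locc_povm2 :: "qqop \<Rightarrow> qqop \<Rightarrow> bool" where
  "locc_povm2 P1 P2 = (\<exists>Ks (f::nat \<Rightarrow> bool). locc_kraus Ks \<and>
      P1 = (\<Sum>j | j < length Ks \<and> f j. adj (Ks ! j) ** (Ks ! j)) \<and>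
      P2 = (\<Sum>j | j < length Ks \<and> \<not> f j. adj (Ks ! j) ** (Ks ! j)))"

end

theory Submission
  imports Defs
begin

text \<open>
  A separable POVM element is a nonnegative combination \<open>\<Sum>\<^sub>k c\<^sub>k |x\<^sub>k\<rangle>\<langle>x\<^sub>k|\<close> of product
  vectors, so \<open>tr(P\<^sub>1 \<rho>\<^sub>2) = 0\<close> forces \<open>P\<^sub>1\<close> to vanish on the support of \<open>\<rho>\<^sub>2\<close>, and
  symmetrically for \<open>P\<^sub>2\<close>. The two orthogonal two-dimensional supports together span
  \<open>\<complex>\<^sup>2 \<otimes> \<complex>\<^sup>2\<close>, so \<open>P\<^sub>1, P\<^sub>2\<close> must be the support projectors, which are therefore separable.
  LOCC measurements are separable because every Kraus operator of a protocol is a tensor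
  product.

  Conversely, the projector \<open>Q\<close> onto the support of \<open>\<rho>\<^sub>1\<close> and \<open>1 - Q\<close> distinguish the states
  perfectly, and this measurement is LOCC when \<open>Q\<close> is separable. The product vectors of the
  decomposition of \<open>Q\<close> lie in the support and span it, so the support is spanned by two of them,
  \<open>a\<otimes>b\<close> and \<open>a'\<otimes>b'\<close>. If \<open>a \<parallel> a'\<close> then \<open>Q = |a\<rangle>\<langle>a| \<otimes> 1\<close>, which Alice measures alone; likewise if \<open>b \<parallel> b'\<close>. Otherwise the only product vectors in the support
  are multiples of \<open>a\<otimes>b\<close> and \<open>a'\<otimes>b'\<close>, and the decomposition of \<open>Q\<close> then forces
  \<open>a\<otimes>b \<perp> a'\<otimes>b'\<close>, i.e. \<open>a \<perp> a'\<close> or \<open>b \<perp> b'\<close>: one party measures in a basis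
  containing the orthogonal pair and the other, knowing the outcome, measures \<open>b\<close> resp. \<open>b'\<close>.
\<close>

lemma cinn_add_right: "cinn x (y + z) = cinn x y + cinn x z"
  by (simp add: cinn_def distrib_left sum.distrib)

lemma cinn_add_left: "cinn (x + y) z = cinn x z + cinn y z"
  by (simp add: cinn_def distrib_right sum.distrib)

lemma cinn_diff_right: "cinn x (y - z) = cinn x y - cinn x z"
  by (simp add: cinn_def right_diff_distrib sum_subtractf)

lemma cinn_diff_left: "cinn (x - y) z = cinn x z - cinn y z"
  by (simp add: cinn_def left_diff_distrib sum_subtractf)

lemma cinn_scale_right: "cinn x (c *s y) = c * cinn x y"
  by (simp add: cinn_def sum_distrib_left mult.left_commute)

lemma cinn_scale_left: "cinn (c *s x) y = cnj c * cinn x y"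
  by (simp add: cinn_def sum_distrib_left mult.assoc)

lemma cinn_0_left [simp]: "cinn 0 y = 0"
  by (simp add: cinn_def)

lemma cinn_0_right [simp]: "cinn x 0 = 0"
  by (simp add: cinn_def)

lemma cinn_sum_right: "cinn x (sum f A) = (\<Sum>a\<in>A. cinn x (f a))"
  by (induction A rule: infinite_finite_induct) (auto simp: cinn_add_right)

lemma cinn_cnj: "cnj (cinn x y) = cinn y x"
  by (simp add: cinn_def mult.commute)

lemma cinn_self: "cinn x x = complex_of_real ((norm x)\<^sup>2)"
proof -
  have "cinn x x = (\<Sum>i\<in>UNIV. complex_of_real ((cmod (x$i))\<^sup>2))"
    unfolding cinn_def
    by (rule sum.cong) (simp_all, metis complex_norm_square mult.commute of_real_power)
  also have "\<dots> = complex_of_real ((norm x)\<^sup>2)"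
    by (simp add: norm_vec_def L2_set_def sum_nonneg del: of_real_power)
  finally show ?thesis .
qed

lemma cinn_self_eq_0_iff [simp]: "cinn x x = 0 \<longleftrightarrow> x = 0"
  by (simp add: cinn_self)

lemma adj_nth [simp]: "adj A $ i $ j = cnj (A $ j $ i)"
  by (simp add: adj_def)

lemma adj_mult: "adj (A ** B) = adj B ** adj A"
  by (simp add: vec_eq_iff matrix_matrix_mult_def mult.commute)

lemma adj_add: "adj (A + B) = adj A + adj B"
  by (simp add: vec_eq_iff)

lemma adj_mat_1 [simp]: "adj (mat 1) = mat 1"
  by (simp add: vec_eq_iff mat_def)

lemma cinn_adj: "cinn x (A *v y) = cinn (adj A *v x) y"
  unfolding cinn_def matrix_vector_mult_def
  by (simp add: sum_distrib_left sum_distrib_right, subst sum.swap) (simp add: mult_ac)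

lemma adj_outer [simp]: "adj (outer v) = outer v"
  by (simp add: outer_def vec_eq_iff)

lemma outer_mult_vec: "outer v *v w = cinn v w *s v"
  by (simp add: outer_def matrix_vector_mult_def cinn_def vec_eq_iff sum_distrib_left mult_ac)

lemma mtrace_outer_mult: "mtrace (outer x ** A) = cinn x (A *v x)"
  unfolding mtrace_def outer_def cinn_def matrix_matrix_mult_def matrix_vector_mult_def
  by (simp add: sum_distrib_left sum_distrib_right, subst sum.swap) (simp add: mult_ac)

lemma mtrace_sum: "mtrace (sum f S) = (\<Sum>x\<in>S. mtrace (f x))"
  by (simp add: mtrace_def sum_component; rule sum.swap)

lemma mtrace_scaleR: "mtrace (c *\<^sub>R A) = of_real c * mtrace A"
  by (simp add: mtrace_def sum_distrib_left) (simp add: scaleR_conv_of_real)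

lemma matrix_add_rdistrib: "(A + B) ** C = A ** C + B ** C"
  by (vector matrix_matrix_mult_def sum.distrib distrib_right)

lemma matrix_mult_sum_left: "sum f S ** B = (\<Sum>x\<in>S. f x ** B)"
  by (induction S rule: infinite_finite_induct) (auto simp: matrix_add_rdistrib)

lemma matrix_mult_sum_right: "B ** sum f S = (\<Sum>x\<in>S. B ** f x)"
  by (induction S rule: infinite_finite_induct) (auto simp: matrix_add_ldistrib)

lemma sum_matrix_vector_mult: "sum f S *v x = (\<Sum>a\<in>S. f a *v x)"
  by (induction S rule: infinite_finite_induct) (auto simp: matrix_vector_mult_add_rdistrib)

lemma scaleR_matrix_vector_mult: "(c *\<^sub>R A) *v x = of_real c *s (A *v x)"
  by (simp add: vec_eq_iff matrix_vector_mult_def sum_distrib_left) (simp add: scaleR_conv_of_real mult.assoc)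

lemma cinn_form_add:
  "cinn (x + y) (A *v (x + y)) = cinn x (A *v x) + cinn y (A *v y) + cinn x (A *v y) + cinn y (A *v x)"
  by (simp add: matrix_vector_right_distrib cinn_add_left cinn_add_right)

text \<open>Polarization: a matrix whose quadratic form is real is Hermitian.\<close>

lemma psd_hermitian:
  assumes "psd A" shows "adj A = A"
proof -
  have Im0: "Im (cinn v (A *v v)) = 0" for v using assms by (simp add: psd_def)
  have sym: "cinn y (A *v x) = cnj (cinn x (A *v y))" for x y
  proof -
    define a where "a = cinn x (A *v y)"
    define b where "b = cinn y (A *v x)"
    have "Im (a + b) = 0"
      using Im0[of "x + y"] Im0[of x] Im0[of y] unfolding cinn_form_add a_def b_def by simp
    moreover have "cinn (x + \<i> *s y) (A *v (x + \<i> *s y)) =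
        cinn x (A *v x) + cinn y (A *v y) + \<i> * a - \<i> * b"
      unfolding cinn_form_add a_def b_def
      by (simp add: vector_scalar_commute cinn_scale_left cinn_scale_right)
    then have "Re a - Re b = 0"
      using Im0[of "x + \<i> *s y"] Im0[of x] Im0[of y] by simp
    ultimately show ?thesis unfolding a_def[symmetric] b_def[symmetric]
      by (simp add: complex_eq_iff)
  qed
  have "A *v x = adj A *v x" for x
  proof -
    have "cinn y (A *v x) = cinn y (adj A *v x)" for y
      using sym[of y x] by (simp add: cinn_adj cinn_cnj)
    then have "cinn (A *v x - adj A *v x) (A *v x - adj A *v x) = 0"
      by (simp add: cinn_diff_left cinn_diff_right)
    then show ?thesis by simp
  qed
  then show ?thesis by (simp add: matrix_eq)
qed

text \<open>If \<open>\<langle>x, A x\<rangle> = 0\<close>, the form is nonnegative along \<open>x - s A x\<close> only if \<open>\<parallel>A x\<parallel> = 0\<close>: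
  its value is \<open>-2 s \<parallel>A x\<parallel>\<^sup>2 + O(s\<^sup>2)\<close>.\<close>

lemma psd_form_eq_0_imp_kernel:
  assumes "psd A" and "cinn x (A *v x) = 0" shows "A *v x = 0"
proof -
  define w where "w = A *v x"
  define N where "N = (norm w)\<^sup>2"
  define M where "M = Re (cinn w (A *v w))"
  have M0: "M \<ge> 0" using assms(1) unfolding M_def psd_def by blast
  have c1: "cinn w (A *v x) = of_real N" by (simp add: w_def N_def cinn_self)
  have c2: "cinn x (A *v w) = of_real N"
    using c1 by (simp add: cinn_adj psd_hermitian[OF assms(1)] w_def)
  have "0 \<le> - 2 * s * N + s * s * M" for s
  proof -
    have "0 \<le> Re (cinn (x - of_real s *s w) (A *v (x - of_real s *s w)))"
      using assms(1) unfolding psd_def by blast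
    also have "\<dots> = - 2 * s * N + s * s * M"
      using assms(2) c1 c2 unfolding M_def
      by (simp add: matrix_vector_mult_diff_distrib vector_scalar_commute cinn_diff_left
          cinn_diff_right cinn_scale_left cinn_scale_right algebra_simps)
    finally show ?thesis .
  qed
  have "N = 0"
  proof (rule ccontr)
    assume "N \<noteq> 0"
    then have N: "N > 0" by (simp add: N_def)
    have "(N/(M+1)) * M \<le> N" using M0 N by (simp add: field_simps)
    then have "(N/(M+1)) * (N/(M+1)) * M \<le> (N/(M+1)) * N"
      using M0 N by (metis mult.assoc mult_left_mono divide_nonneg_nonneg less_le add_nonneg_pos zero_less_one)
    moreover have "0 < (N/(M+1)) * N" using N M0 by simp
    moreover have "0 \<le> - 2 * (N/(M+1)) * N + (N/(M+1)) * (N/(M+1)) * M" by fact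
    ultimately show False by linarith
  qed
  then show ?thesis by (simp add: N_def w_def)
qed

lemma psd_outer: "psd (outer x)"
proof -
  have "cinn v (outer x *v v) = of_real ((cmod (cinn x v))\<^sup>2)" for v
    using cinn_cnj[of x v]
    by (simp add: outer_mult_vec cinn_scale_right) (metis complex_norm_square of_real_power)
  then show ?thesis unfolding psd_def by simp
qed

lemma psd_add: "psd A \<Longrightarrow> psd B \<Longrightarrow> psd (A + B)"
  by (simp add: psd_def matrix_vector_mult_add_rdistrib cinn_add_right)

lemma psd_scaleR: "psd A \<Longrightarrow> 0 \<le> c \<Longrightarrow> psd (c *\<^sub>R A)"
  by (simp add: psd_def scaleR_matrix_vector_mult cinn_scale_right)

lemma psd_sum: "(\<And>x. x \<in> S \<Longrightarrow> psd (f x)) \<Longrightarrow> psd (sum f S)"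
  by (induction S rule: infinite_finite_induct) (auto simp: psd_add psd_def[of 0])

lemma psd_sum_outer_trace_eq_0:
  fixes x :: "nat \<Rightarrow> complex^'n"
  assumes "\<forall>k<n. 0 \<le> c k" and "psd R" and "mtrace ((\<Sum>k<n. c k *\<^sub>R outer (x k)) ** R) = 0"
    and "k < n" and "c k \<noteq> 0"
  shows "R *v x k = 0"
proof -
  have "(\<Sum>k<n. c k * Re (cinn (x k) (R *v x k))) = Re (mtrace ((\<Sum>k<n. c k *\<^sub>R outer (x k)) ** R))"
    by (simp add: matrix_mult_sum_left mtrace_sum scalar_matrix_assoc[symmetric] mtrace_scaleR
        mtrace_outer_mult Re_sum)
  also have "\<dots> = 0" using assms(3) by simp
  finally have "\<forall>k\<in>{..<n}. c k * Re (cinn (x k) (R *v x k)) = 0"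
    using assms(1,2) unfolding psd_def by (subst sum_nonneg_eq_0_iff[symmetric]) auto
  then have "c k * Re (cinn (x k) (R *v x k)) = 0" using assms(4) by blast
  then have "Re (cinn (x k) (R *v x k)) = 0" using assms(5) by simp
  moreover have "Im (cinn (x k) (R *v x k)) = 0" using assms(2) unfolding psd_def by blast
  ultimately show ?thesis using psd_form_eq_0_imp_kernel[OF assms(2)] by (simp add: complex_eq_iff)
qed

definition tensor_vec :: "complex^'a \<Rightarrow> complex^'b \<Rightarrow> complex^('a \<times> 'b)" where
  "tensor_vec a b = (\<chi> p. a $ fst p * b $ snd p)"

lemma tensor_vec_nth [simp]: "tensor_vec a b $ p = a $ fst p * b $ snd p"
  by (simp add: tensor_vec_def)

lemma tensor_nth [simp]: "tensor A B $ p $ q = A $ fst p $ fst q * B $ snd p $ snd q"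
  by (simp add: tensor_def)

lemma sum_UNIV_prod:
  "(\<Sum>p\<in>(UNIV::('a::finite \<times> 'b::finite) set). f p) = (\<Sum>i\<in>UNIV. \<Sum>j\<in>UNIV. f (i, j))"
  by (simp add: sum.cartesian_product UNIV_Times_UNIV[symmetric] del: UNIV_Times_UNIV)

lemma tensor_outer: "tensor (outer a) (outer b) = outer (tensor_vec a b)"
  by (simp add: vec_eq_iff outer_def mult_ac)

lemma tensor_mult: "tensor A B ** tensor C D = tensor (A ** C) (B ** D)"
proof -
  have "(\<Sum>i\<in>UNIV. \<Sum>j\<in>UNIV. A $ a $ i * B $ b $ j * (C $ i $ c * D $ j $ d)) =
        (\<Sum>i\<in>UNIV. A $ a $ i * C $ i $ c) * (\<Sum>j\<in>UNIV. B $ b $ j * D $ j $ d)" for a b c d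
    by (simp add: sum_product mult_ac)
  then show ?thesis
    by (simp add: vec_eq_iff matrix_matrix_mult_def sum_UNIV_prod)
qed

lemma adj_tensor: "adj (tensor A B) = tensor (adj A) (adj B)"
  by (simp add: vec_eq_iff)

lemma tensor_mat_1: "tensor (mat 1) (mat 1) = mat 1"
  by (auto simp: vec_eq_iff mat_def prod_eq_iff)

lemma tensor_sum_list_left: "tensor (\<Sum>x\<leftarrow>xs. f x) B = (\<Sum>x\<leftarrow>xs. tensor (f x) B)"
  by (induction xs) (auto simp: vec_eq_iff distrib_right)

lemma tensor_sum_list_right: "tensor A (\<Sum>x\<leftarrow>xs. f x) = (\<Sum>x\<leftarrow>xs. tensor A (f x))"
  by (induction xs) (auto simp: vec_eq_iff distrib_left)

lemma tensor_mult_tensor_vec: "tensor A B *v tensor_vec a b = tensor_vec (A *v a) (B *v b)"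
proof -
  have "(\<Sum>i\<in>UNIV. \<Sum>j\<in>UNIV. A $ p $ i * B $ q $ j * (a $ i * b $ j)) =
        (\<Sum>i\<in>UNIV. A $ p $ i * a $ i) * (\<Sum>j\<in>UNIV. B $ q $ j * b $ j)" for p q
    by (simp add: sum_product mult_ac)
  then show ?thesis
    by (simp add: vec_eq_iff matrix_vector_mult_def sum_UNIV_prod)
qed

lemma cinn_tensor_vec: "cinn (tensor_vec a b) (tensor_vec c d) = cinn a c * cinn b d"
proof -
  have "(\<Sum>i\<in>UNIV. \<Sum>j\<in>UNIV. cnj (a $ i) * cnj (b $ j) * (c $ i * d $ j)) =
        (\<Sum>i\<in>UNIV. cnj (a $ i) * c $ i) * (\<Sum>j\<in>UNIV. cnj (b $ j) * d $ j)"
    by (simp add: sum_product mult_ac)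
  then show ?thesis
    by (simp add: cinn_def sum_UNIV_prod)
qed

lemma tensor_vec_scale_left: "tensor_vec (c *s a) b = c *s tensor_vec a b"
  by (simp add: vec_eq_iff mult.assoc)

lemma tensor_vec_scale_right: "tensor_vec a (c *s b) = c *s tensor_vec a b"
  by (simp add: vec_eq_iff mult_ac)

lemma tensor_vec_add_left: "tensor_vec (a + a') b = tensor_vec a b + tensor_vec a' b"
  by (simp add: vec_eq_iff distrib_right)

lemma tensor_vec_add_right: "tensor_vec a (b + b') = tensor_vec a b + tensor_vec a b'"
  by (simp add: vec_eq_iff distrib_left)

lemma tensor_outer_mat_1_mult_vec:
  "tensor (outer a) (mat 1) *v v = tensor_vec a (\<chi> j. \<Sum>i\<in>UNIV. cnj (a$i) * v$(i,j))"
  by (simp add: vec_eq_iff matrix_vector_mult_def outer_def sum_UNIV_prod mat_def sum_distrib_left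
      if_distrib if_distribR sum.delta mult_ac cong: if_cong)

lemma sum_sum_if_eq:
  "(\<Sum>i\<in>UNIV. \<Sum>j\<in>UNIV. if a = i then f i j else 0) = (\<Sum>j\<in>UNIV. f a j)"
  for f :: "'a::finite \<Rightarrow> 'b::finite \<Rightarrow> 'c::comm_monoid_add"
proof -
  have "(\<Sum>j\<in>UNIV. if a = i then f i j else 0) = (if a = i then (\<Sum>j\<in>UNIV. f i j) else 0)" for i
    by (cases "a = i") simp_all
  then show ?thesis by (simp add: sum.delta')
qed

lemma tensor_mat_1_outer_mult_vec:
  "tensor (mat 1) (outer b) *v v = tensor_vec (\<chi> i. \<Sum>j\<in>UNIV. cnj (b$j) * v$(i,j)) b"
  by (simp add: vec_eq_iff matrix_vector_mult_def outer_def sum_UNIV_prod mat_def sum_distrib_left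
      if_distrib if_distribR sum_sum_if_eq mult_ac cong: if_cong)

section \<open>Separable operators\<close>

lemma separable_0: "separable 0"
  unfolding separable_def by (rule exI[of _ 0]) simp

lemma separable_add_term:
  assumes "separable A" "0 \<le> c" "norm a = 1" "norm b = 1"
  shows "separable (A + c *\<^sub>R tensor (outer a) (outer b))"
proof -
  obtain n cs as bs where h: "\<forall>k<(n::nat). 0 \<le> cs k \<and> norm (as k) = 1 \<and> norm (bs k) = 1"
    and A: "A = (\<Sum>k<n. cs k *\<^sub>R tensor (outer (as k)) (outer (bs k)))"
    using assms(1) unfolding separable_def by blast
  define cs' where "cs' = cs(n := c)"
  define as' where "as' = as(n := a)"
  define bs' where "bs' = bs(n := b)"
  have "A = (\<Sum>k<n. cs' k *\<^sub>R tensor (outer (as' k)) (outer (bs' k)))"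
    unfolding A cs'_def as'_def bs'_def by (rule sum.cong) auto
  then have "A + c *\<^sub>R tensor (outer a) (outer b) =
      (\<Sum>k<Suc n. cs' k *\<^sub>R tensor (outer (as' k)) (outer (bs' k)))"
    by (simp add: cs'_def as'_def bs'_def)
  moreover have "\<forall>k<Suc n. 0 \<le> cs' k \<and> norm (as' k) = 1 \<and> norm (bs' k) = 1"
    using h assms by (auto simp: cs'_def as'_def bs'_def less_Suc_eq)
  ultimately show ?thesis unfolding separable_def by blast
qed

lemma separable_add:
  assumes "separable A" "separable B" shows "separable (A + B)"
proof -
  obtain n cs as bs where h: "\<forall>k<(n::nat). 0 \<le> cs k \<and> norm (as k) = 1 \<and> norm (bs k) = 1"
    and B: "B = (\<Sum>k<n. cs k *\<^sub>R tensor (outer (as k)) (outer (bs k)))"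
    using assms(2) unfolding separable_def by blast
  have "m \<le> n \<Longrightarrow> separable (A + (\<Sum>k<m. cs k *\<^sub>R tensor (outer (as k)) (outer (bs k))))" for m
  proof (induction m)
    case 0 then show ?case using assms(1) by simp
  next
    case (Suc m)
    then have "separable (A + (\<Sum>k<m. cs k *\<^sub>R tensor (outer (as k)) (outer (bs k)))
        + cs m *\<^sub>R tensor (outer (as m)) (outer (bs m)))"
      using h by (intro separable_add_term) auto
    then show ?case by (simp add: add.assoc)
  qed
  then show ?thesis using B by simp
qed

lemma separable_sum: "(\<And>x. x \<in> S \<Longrightarrow> separable (f x)) \<Longrightarrow> separable (sum f S)"
  by (induction S rule: infinite_finite_induct) (auto simp: separable_0 separable_add)

lemma separable_outer_tensor_vec: "separable (outer (tensor_vec (a::qvec) (b::qvec)))"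
proof (cases "a = 0 \<or> b = 0")
  case True
  then have "outer (tensor_vec a b) = 0" by (auto simp: vec_eq_iff outer_def)
  then show ?thesis by (simp add: separable_0)
next
  case False
  define a' where "a' = (1 / norm a) *\<^sub>R a"
  define b' where "b' = (1 / norm b) *\<^sub>R b"
  have a: "a = norm a *\<^sub>R a'" and b: "b = norm b *\<^sub>R b'"
    using False by (simp_all add: a'_def b'_def)
  have "outer (tensor_vec (r *\<^sub>R x) (t *\<^sub>R y)) = (r * t * (r * t)) *\<^sub>R outer (tensor_vec x y)"
    for r t :: real and x y :: qvec
    by (simp add: vec_eq_iff outer_def)
  then have "outer (tensor_vec a b) = 0 + (norm a * norm b * (norm a * norm b)) *\<^sub>R tensor (outer a') (outer b')"
    by (subst a, subst b) (simp add: tensor_outer)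
  also have "separable \<dots>"
    using False by (intro separable_add_term separable_0) (simp_all add: a'_def b'_def)
  finally show ?thesis .
qed

lemma separable_decomp:
  assumes "separable A"
  obtains n c a b where "\<forall>k<(n::nat). 0 \<le> c k \<and> cinn (a k) (a k) = 1 \<and> cinn (b k) (b k) = 1"
    and "A = (\<Sum>k<n. c k *\<^sub>R outer (tensor_vec (a k) (b k :: qvec) :: qqvec))"
proof -
  obtain n c a b where h: "\<forall>k<(n::nat). 0 \<le> c k \<and> norm (a k) = 1 \<and> norm (b k) = 1"
    and A: "A = (\<Sum>k<n. c k *\<^sub>R tensor (outer (a k)) (outer (b k)))"
    using assms unfolding separable_def by blast
  have "\<forall>k<n. 0 \<le> c k \<and> cinn (a k) (a k) = 1 \<and> cinn (b k) (b k) = 1"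
    using h by (simp add: cinn_self)
  moreover have "A = (\<Sum>k<n. c k *\<^sub>R outer (tensor_vec (a k) (b k)))"
    using A by (simp add: tensor_outer)
  ultimately show ?thesis by (rule that)
qed

lemma separable_imp_psd: "separable A \<Longrightarrow> psd A"
  by (erule separable_decomp) (auto intro!: psd_sum psd_scaleR psd_outer)

text \<open>\<open>(A \<otimes> B)\<^sup>* (A \<otimes> B)\<close> is the sum of \<open>|x\<rangle>\<langle>x|\<close> over the conjugated rows \<open>x\<close> of \<open>A \<otimes> B\<close>,
  which are product vectors.\<close>

lemma separable_adj_mult_tensor: "separable (adj (tensor (A::qop) (B::qop)) ** tensor A B)"
proof -
  have outer_rows: "adj M ** M = (\<Sum>i\<in>UNIV. outer (\<chi> j. cnj (M$i$j)))" for M :: qop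
    by (simp add: vec_eq_iff matrix_matrix_mult_def outer_def sum_component)
  have "adj (tensor A B) ** tensor A B = tensor (adj A ** A) (adj B ** B)"
    by (simp add: adj_tensor tensor_mult)
  also have "\<dots> = (\<Sum>i\<in>UNIV. \<Sum>i'\<in>UNIV. tensor (outer (\<chi> j. cnj (A$i$j))) (outer (\<chi> j. cnj (B$i'$j))))"
    unfolding outer_rows by (simp add: vec_eq_iff sum_component sum_product)
  also have "\<dots> = (\<Sum>i\<in>UNIV. \<Sum>i'\<in>UNIV. outer (tensor_vec (\<chi> j. cnj (A$i$j)) (\<chi> j. cnj (B$i'$j))))"
    by (simp add: tensor_outer)
  also have "separable \<dots>"
    by (intro separable_sum separable_outer_tensor_vec)
  finally show ?thesis .
qed

lemma separable_trace_eq_0_imp_mult_eq_0: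
  assumes "separable P" "psd R" "mtrace (P ** R) = 0" shows "R ** P = 0"
proof -
  obtain n c a b where h: "\<forall>k<(n::nat). 0 \<le> c k \<and> cinn (a k) (a k) = 1 \<and> cinn (b k) (b k) = 1"
    and P: "P = (\<Sum>k<n. c k *\<^sub>R outer (tensor_vec (a k) (b k)))"
    using separable_decomp[OF assms(1)] by blast
  have "c k *\<^sub>R (R ** outer (tensor_vec (a k) (b k))) = 0" if "k < n" for k
  proof (cases "c k = 0")
    case False
    then have "R *v tensor_vec (a k) (b k) = 0"
      using psd_sum_outer_trace_eq_0[of n c R "\<lambda>k. tensor_vec (a k) (b k)" k] assms(2,3) P h that
      by auto
    then have "R ** outer (tensor_vec (a k) (b k)) = 0"
      by (simp add: matrix_eq matrix_vector_mul_assoc[symmetric] outer_mult_vec vector_scalar_commute)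
    then show ?thesis by simp
  qed simp
  then show ?thesis
    by (simp add: P matrix_mult_sum_right matrix_scalar_ac scalar_matrix_assoc)
qed

section \<open>Operations realisable by LOCC\<close>

lemma locc_kraus_tensor: "locc_kraus Ks \<Longrightarrow> K \<in> set Ks \<Longrightarrow> \<exists>A B. K = tensor A B"
proof (induction arbitrary: K rule: locc_kraus.induct)
  case start
  then show ?case by simp (metis tensor_mat_1)
next
  case (alice Ks Ms)
  then obtain j m where j: "j < length Ks" and K: "K = tensor m (mat 1) ** Ks ! j" by auto
  obtain A B where "Ks ! j = tensor A B" using alice.IH j nth_mem by blast
  then show ?case using K by (auto simp: tensor_mult)
next
  case (bob Ks Ms)
  then obtain j m where j: "j < length Ks" and K: "K = tensor (mat 1) m ** Ks ! j" by auto
  obtain A B where "Ks ! j = tensor A B" using bob.IH j nth_mem by blast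
  then show ?case using K by (auto simp: tensor_mult)
qed

lemma sum_list_concat: "sum_list (concat xss) = (\<Sum>xs\<leftarrow>xss. sum_list xs)"
  by (induction xss) simp_all

lemma sum_adj_mult_refine:
  fixes Ks :: "qqop list" and T :: "'m \<Rightarrow> qqop"
  assumes "\<forall>j<length Ks. (\<Sum>m\<leftarrow>Ms ! j. adj (T m) ** T m) = mat 1"
  shows "(\<Sum>K\<leftarrow>concat (map (\<lambda>j. map (\<lambda>m. T m ** Ks ! j) (Ms ! j)) [0..<length Ks]). adj K ** K)
       = (\<Sum>K\<leftarrow>Ks. adj K ** K)"
proof -
  have branch: "(\<Sum>m\<leftarrow>ms. adj (T m ** K) ** (T m ** K)) = adj K ** ((\<Sum>m\<leftarrow>ms. adj (T m) ** T m) ** K)"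
    for ms and K :: qqop
    by (induction ms) (simp_all add: adj_mult matrix_mul_assoc matrix_add_ldistrib matrix_add_rdistrib)
  have "(\<Sum>K\<leftarrow>concat (map (\<lambda>j. map (\<lambda>m. T m ** Ks ! j) (Ms ! j)) [0..<length Ks]). adj K ** K)
      = (\<Sum>j\<leftarrow>[0..<length Ks]. \<Sum>m\<leftarrow>Ms ! j. adj (T m ** Ks ! j) ** (T m ** Ks ! j))"
    by (simp add: map_concat sum_list_concat o_def)
  also have "\<dots> = (\<Sum>j\<leftarrow>[0..<length Ks]. adj (Ks ! j) ** Ks ! j)"
    using assms by (intro arg_cong[where f = sum_list] map_cong) (simp_all add: branch)
  also have "\<dots> = (\<Sum>K\<leftarrow>Ks. adj K ** K)"
    by (rule arg_cong[where f = sum_list], rule nth_equalityI) simp_all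
  finally show ?thesis .
qed

lemma locc_kraus_complete: "locc_kraus Ks \<Longrightarrow> (\<Sum>K\<leftarrow>Ks. adj K ** K) = mat 1"
proof (induction rule: locc_kraus.induct)
  case start
  then show ?case by simp
next
  case (alice Ks Ms)
  have "(\<Sum>m\<leftarrow>Ms ! j. adj (tensor m (mat 1)) ** tensor m (mat 1)) = mat 1" if "j < length Ks" for j
  proof -
    have "(\<Sum>m\<leftarrow>Ms ! j. adj (tensor m (mat 1)) ** tensor m (mat 1))
        = tensor (\<Sum>m\<leftarrow>Ms ! j. adj m ** m) (mat 1)"
      by (simp add: adj_tensor tensor_mult tensor_sum_list_left)
    then show ?thesis
      using alice.hyps(3) that by (simp add: local_instrument_def tensor_mat_1)
  qed
  then show ?case using alice.IH by (subst sum_adj_mult_refine) auto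
next
  case (bob Ks Ms)
  have "(\<Sum>m\<leftarrow>Ms ! j. adj (tensor (mat 1) m) ** tensor (mat 1) m) = mat 1" if "j < length Ks" for j
  proof -
    have "(\<Sum>m\<leftarrow>Ms ! j. adj (tensor (mat 1) m) ** tensor (mat 1) m)
        = tensor (mat 1) (\<Sum>m\<leftarrow>Ms ! j. adj m ** m)"
      by (simp add: adj_tensor tensor_mult tensor_sum_list_right)
    then show ?thesis
      using bob.hyps(3) that by (simp add: local_instrument_def tensor_mat_1)
  qed
  then show ?case using bob.IH by (subst sum_adj_mult_refine) auto
qed

lemma locc_kraus_sum_outcomes:
  assumes "locc_kraus Ks"
  shows "(\<Sum>j | j < length Ks \<and> f j. adj (Ks ! j) ** Ks ! j) +
         (\<Sum>j | j < length Ks \<and> \<not> f j. adj (Ks ! j) ** Ks ! j) = mat 1"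
proof -
  have "{j. j < length Ks \<and> f j} \<union> {j. j < length Ks \<and> \<not> f j} = {..<length Ks}" by auto
  then have "(\<Sum>j | j < length Ks \<and> f j. adj (Ks ! j) ** Ks ! j) +
         (\<Sum>j | j < length Ks \<and> \<not> f j. adj (Ks ! j) ** Ks ! j) =
        (\<Sum>j<length Ks. adj (Ks ! j) ** Ks ! j)"
    by (subst sum.union_disjoint[symmetric]) auto
  also have "\<dots> = mat 1"
    using locc_kraus_complete[OF assms] by (simp add: sum_list_sum_nth atLeast0LessThan)
  finally show ?thesis .
qed

lemma locc_povm2_imp_sep_povm2: "locc_povm2 P1 P2 \<Longrightarrow> sep_povm2 P1 P2"
proof -
  assume "locc_povm2 P1 P2"
  then obtain Ks f where K: "locc_kraus Ks"
    and P1: "P1 = (\<Sum>j | j < length Ks \<and> f j. adj (Ks ! j) ** Ks ! j)"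
    and P2: "P2 = (\<Sum>j | j < length Ks \<and> \<not> f j. adj (Ks ! j) ** Ks ! j)"
    unfolding locc_povm2_def by blast
  have "separable (\<Sum>j | j < length Ks \<and> g j. adj (Ks ! j) ** Ks ! j)" for g
  proof (rule separable_sum)
    fix j assume "j \<in> {j. j < length Ks \<and> g j}"
    then obtain A B where "Ks ! j = tensor A B" using locc_kraus_tensor[OF K] by fastforce
    then show "separable (adj (Ks ! j) ** Ks ! j)" by (simp add: separable_adj_mult_tensor)
  qed
  then show ?thesis
    using locc_kraus_sum_outcomes[OF K, of f]
    by (simp add: P1 P2 sep_povm2_def povm2_def separable_imp_psd)
qed

lemma locc_povm2_intro:
  assumes "locc_kraus Ks" "J \<subseteq> {..<length Ks}" "(\<Sum>j\<in>J. adj (Ks ! j) ** Ks ! j) = P"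
  shows "locc_povm2 P (mat 1 - P)"
proof -
  have "{j. j < length Ks \<and> j \<in> J} = J" using assms(2) by auto
  then have P: "(\<Sum>j | j < length Ks \<and> j \<in> J. adj (Ks ! j) ** Ks ! j) = P"
    using assms(3) by simp
  then have "P + (\<Sum>j | j < length Ks \<and> j \<notin> J. adj (Ks ! j) ** Ks ! j) = mat 1"
    using locc_kraus_sum_outcomes[OF assms(1), of "\<lambda>j. j \<in> J"] by simp
  then have "mat 1 - P = (\<Sum>j | j < length Ks \<and> j \<notin> J. adj (Ks ! j) ** Ks ! j)"
    by (simp flip: \<open>P + _ = mat 1\<close>)
  then show ?thesis
    unfolding locc_povm2_def using assms(1) P[symmetric]
    by (intro exI[of _ Ks] exI[of _ "\<lambda>j. j \<in> J"] conjI) simp_all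
qed

lemma locc_kraus_alice:
  "local_instrument [m1, m2] \<Longrightarrow> locc_kraus [tensor m1 (mat 1), tensor m2 (mat 1)]"
  using locc_kraus.alice[OF locc_kraus.start, of "[[m1, m2]]"] by simp

lemma locc_kraus_bob:
  "local_instrument [m1, m2] \<Longrightarrow> locc_kraus [tensor (mat 1) m1, tensor (mat 1) m2]"
  using locc_kraus.bob[OF locc_kraus.start, of "[[m1, m2]]"] by simp

lemma locc_kraus_alice_bob:
  assumes "local_instrument [m1, m2]" "local_instrument [n1, n2]" "local_instrument [n3, n4]"
  shows "locc_kraus [tensor m1 n1, tensor m1 n2, tensor m2 n3, tensor m2 n4]"
  using locc_kraus.bob[OF locc_kraus_alice[OF assms(1)], of "[[n1, n2], [n3, n4]]"] assms(2,3)
  by (simp add: less_Suc_eq upt_rec tensor_mult)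

lemma locc_kraus_bob_alice:
  assumes "local_instrument [n1, n2]" "local_instrument [m1, m2]" "local_instrument [m3, m4]"
  shows "locc_kraus [tensor m1 n1, tensor m2 n1, tensor m3 n2, tensor m4 n2]"
  using locc_kraus.alice[OF locc_kraus_bob[OF assms(1)], of "[[m1, m2], [m3, m4]]"] assms(2,3)
  by (simp add: less_Suc_eq upt_rec tensor_mult)

section \<open>Qubit bases and simple LOCC measurements\<close>

definition det2 :: "qvec \<Rightarrow> qvec \<Rightarrow> complex" where
  "det2 a b = a$1 * b$2 - a$2 * b$1"

lemma vec2_eq_iff: "(v::'a^2) = w \<longleftrightarrow> v$1 = w$1 \<and> v$2 = w$2"
  by (simp add: vec_eq_iff forall_2)

lemma cinn2: "cinn (a::qvec) b = cnj (a$1) * b$1 + cnj (a$2) * b$2"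
  by (simp add: cinn_def sum_2)

lemma det2_eq_0_imp_parallel:
  assumes "cinn a a = 1" "det2 a b = 0" obtains s where "b = s *s a"
proof (cases "a$1 = 0")
  case True
  then have "a$2 \<noteq> 0" using assms(1) by (auto simp: cinn2)
  then show ?thesis using assms(2) True
    by (intro that[of "b$2 / a$2"]) (auto simp: vec2_eq_iff det2_def field_simps)
next
  case False
  then show ?thesis using assms(2)
    by (intro that[of "b$1 / a$1"]) (auto simp: vec2_eq_iff det2_def field_simps)
qed

lemma det2_neq_0_span:
  assumes "det2 a b \<noteq> 0" obtains l m where "w = l *s a + m *s b"
proof (rule that)
  define d where "d = det2 a b"
  define x where "x = w$1 * b$2 - w$2 * b$1"
  define y where "y = a$1 * w$2 - a$2 * w$1"
  have "x * a$1 + y * b$1 = w$1 * d" "x * a$2 + y * b$2 = w$2 * d"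
    by (simp_all add: x_def y_def d_def det2_def algebra_simps)
  then have "(x/d) * a$1 + (y/d) * b$1 = w$1" "(x/d) * a$2 + (y/d) * b$2 = w$2"
    using assms by (simp_all add: d_def add_divide_distrib[symmetric])
  then show "w = (x/d) *s a + (y/d) *s b" by (simp add: vec2_eq_iff)
qed

lemma orthonormal_outer_sum:
  fixes a a' :: qvec
  assumes "cinn a a = 1" "cinn a' a' = 1" "cinn a a' = 0"
  shows "outer a + outer a' = mat 1"
proof -
  have "det2 a a' \<noteq> 0"
  proof
    assume "det2 a a' = 0"
    then obtain s where "a' = s *s a" using det2_eq_0_imp_parallel[OF assms(1)] by blast
    then show False using assms by (simp add: cinn_scale_left cinn_scale_right)
  qed
  have "(outer a + outer a') *v w = w" for w
  proof -
    obtain l m where w: "w = l *s a + m *s a'" using det2_neq_0_span[OF \<open>det2 a a' \<noteq> 0\<close>] .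
    have "cinn a' a = 0" using assms(3) cinn_cnj[of a a'] by simp
    then show ?thesis
      using assms by (simp add: w matrix_vector_mult_add_rdistrib outer_mult_vec cinn_add_right
          cinn_scale_right)
  qed
  then show ?thesis by (simp add: matrix_eq)
qed

definition perp :: "qvec \<Rightarrow> qvec" where
  "perp a = (\<chi> i. if i = 1 then - cnj (a$2) else cnj (a$1))"

lemma outer_idem: "cinn v v = 1 \<Longrightarrow> outer v ** outer v = outer v"
  by (simp add: matrix_eq matrix_vector_mul_assoc[symmetric] outer_mult_vec cinn_scale_right)

lemma local_instrument_orthonormal:
  assumes "cinn (a::qvec) a = 1" "cinn a' a' = 1" "cinn a a' = 0"
  shows "local_instrument [outer a, outer a']"
  using assms by (simp add: local_instrument_def orthonormal_outer_sum outer_idem)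

lemma local_instrument_perp: "cinn (a::qvec) a = 1 \<Longrightarrow> local_instrument [outer a, outer (perp a)]"
  by (rule local_instrument_orthonormal) (simp_all add: cinn2 perp_def mult.commute add.commute)

text \<open>The determinant of a vector of \<open>\<complex>\<^sup>2 \<otimes> \<complex>\<^sup>2\<close> read as a \<open>2\<times>2\<close> matrix vanishes on
  product vectors and factorises on \<open>l a\<otimes>b + m a'\<otimes>b'\<close>.\<close>

lemma tensor_vec_in_span2_parallel:
  assumes "tensor_vec p q = l *s tensor_vec a b + m *s tensor_vec a' b'"
    "det2 a a' \<noteq> 0" "det2 b b' \<noteq> 0"
  shows "l = 0 \<or> m = 0"
proof -
  let ?det = "\<lambda>z::qqvec. z$(1,1) * z$(2,2) - z$(1,2) * z$(2,1)"
  have "?det (l *s tensor_vec a b + m *s tensor_vec a' b') = l * m * det2 a a' * det2 b b'"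
    by (simp add: det2_def) algebra
  moreover have "?det (tensor_vec p q) = 0" by simp
  ultimately show ?thesis using assms by simp
qed

lemma locc_povm2_outer_tensor_left:
  assumes "cinn (a::qvec) a = 1"
  shows "locc_povm2 (tensor (outer a) (mat 1)) (mat 1 - tensor (outer a) (mat 1))"
  using assms
  by (intro locc_povm2_intro[OF locc_kraus_alice[OF local_instrument_perp[OF assms]], of "{0}"])
    (simp_all add: adj_tensor tensor_mult outer_idem)

lemma locc_povm2_outer_tensor_right:
  assumes "cinn (b::qvec) b = 1"
  shows "locc_povm2 (tensor (mat 1) (outer b)) (mat 1 - tensor (mat 1) (outer b))"
  using assms
  by (intro locc_povm2_intro[OF locc_kraus_bob[OF local_instrument_perp[OF assms]], of "{0}"])
    (simp_all add: adj_tensor tensor_mult outer_idem)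

text \<open>Alice measures in the basis \<open>{a, a'}\<close>; Bob then tests for \<open>b\<close> or \<open>b'\<close> accordingly.\<close>

lemma locc_povm2_orthogonal_left:
  fixes a a' b b' :: qvec
  assumes "cinn a a = 1" "cinn a' a' = 1" "cinn a a' = 0" "cinn b b = 1" "cinn b' b' = 1"
  shows "locc_povm2 (outer (tensor_vec a b) + outer (tensor_vec a' b'))
           (mat 1 - (outer (tensor_vec a b) + outer (tensor_vec a' b')))"
  using assms
  by (intro locc_povm2_intro[OF locc_kraus_alice_bob[OF local_instrument_orthonormal[OF assms(1-3)]
      local_instrument_perp[OF assms(4)] local_instrument_perp[OF assms(5)]], of "{0, 2}"])
    (simp_all add: adj_tensor tensor_mult outer_idem tensor_outer cinn_tensor_vec)

lemma locc_povm2_orthogonal_right: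
  fixes a a' b b' :: qvec
  assumes "cinn a a = 1" "cinn a' a' = 1" "cinn b b' = 0" "cinn b b = 1" "cinn b' b' = 1"
  shows "locc_povm2 (outer (tensor_vec a b) + outer (tensor_vec a' b'))
           (mat 1 - (outer (tensor_vec a b) + outer (tensor_vec a' b')))"
  using assms
  by (intro locc_povm2_intro[OF locc_kraus_bob_alice[OF local_instrument_orthonormal[OF assms(4,5,3)]
      local_instrument_perp[OF assms(1)] local_instrument_perp[OF assms(2)]], of "{0, 2}"])
    (simp_all add: adj_tensor tensor_mult outer_idem tensor_outer cinn_tensor_vec)

section \<open>Supports and orthogonal projectors\<close>

definition vcnj :: "complex^'n \<Rightarrow> complex^'n" where
  "vcnj v = (\<chi> i. cnj (v$i))"

lemma vcnj_vcnj [simp]: "vcnj (vcnj v) = v"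
  by (simp add: vcnj_def vec_eq_iff)

lemma vcnj_add: "vcnj (x + y) = vcnj x + vcnj y"
  by (simp add: vcnj_def vec_eq_iff)

lemma vcnj_scale: "vcnj (c *s x) = cnj c *s vcnj x"
  by (simp add: vcnj_def vec_eq_iff)

lemma inj_vcnj: "inj vcnj"
  by (metis vcnj_vcnj injI)

lemma vcnj_span: "x \<in> vec.span B \<Longrightarrow> vcnj x \<in> vec.span (vcnj ` B)"
proof -
  assume x: "x \<in> vec.span B"
  have "vec.subspace {x. vcnj x \<in> vec.span (vcnj ` B)}"
  proof (rule vec.subspaceI)
    show "0 \<in> {x. vcnj x \<in> vec.span (vcnj ` B)}"
      using vec.span_zero by (simp add: vcnj_def zero_vec_def)
    show "x + y \<in> {x. vcnj x \<in> vec.span (vcnj ` B)}"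
      "c *s x \<in> {x. vcnj x \<in> vec.span (vcnj ` B)}"
      if "x \<in> {x. vcnj x \<in> vec.span (vcnj ` B)}" "y \<in> {x. vcnj x \<in> vec.span (vcnj ` B)}" for c x y
      using that by (simp_all add: vcnj_add vcnj_scale vec.span_add vec.span_scale)
  qed
  moreover have "B \<subseteq> {x. vcnj x \<in> vec.span (vcnj ` B)}"
    by (auto intro: vec.span_base)
  ultimately show ?thesis using vec.span_minimal x by blast
qed

lemma vcnj_independent: "vec.independent B \<Longrightarrow> vec.independent (vcnj ` B)"
proof -
  assume ind: "vec.independent B"
  then have fin: "finite B" and h: "\<And>c. (\<Sum>v\<in>B. c v *s v) = 0 \<Longrightarrow> \<forall>v\<in>B. c v = 0"
    unfolding vec.independent_explicit by auto
  have "\<forall>w\<in>vcnj ` B. c w = 0" if c: "(\<Sum>w\<in>vcnj ` B. c w *s w) = 0" for c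
  proof -
    have "(\<Sum>v\<in>B. c (vcnj v) *s vcnj v) = 0"
      using c by (simp add: sum.reindex inj_on_subset[OF inj_vcnj])
    then have "vcnj (\<Sum>v\<in>B. c (vcnj v) *s vcnj v) = 0" by (simp add: vcnj_def vec_eq_iff)
    then have "(\<Sum>v\<in>B. cnj (c (vcnj v)) *s v) = 0" by (simp add: vcnj_def vec_eq_iff sum_component)
    then show ?thesis using h by fastforce
  qed
  then show ?thesis unfolding vec.independent_explicit using fin by auto
qed

lemma dim_vcnj: "vec.dim (vcnj ` X) = vec.dim X"
proof -
  obtain B where B: "B \<subseteq> X" "vec.independent B" "X \<subseteq> vec.span B" "card B = vec.dim X"
    using vec.basis_exists by blast
  have "card (vcnj ` B) = vec.dim (vcnj ` X)"
    using B by (intro vec.basis_card_eq_dim vcnj_independent) (auto intro: vcnj_span)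
  moreover have "card (vcnj ` B) = card B"
    by (rule card_image) (rule inj_on_subset[OF inj_vcnj], simp)
  ultimately show ?thesis using B by simp
qed

lemma subspace_support: "vec.subspace (support (A::complex^'n^'n))"
proof (rule vec.subspaceI)
  show "0 \<in> support A" unfolding support_def by (rule range_eqI[of _ _ 0]) simp
  show "x + y \<in> support A" if "x \<in> support A" "y \<in> support A" for x y
    using that unfolding support_def by (auto, metis matrix_vector_right_distrib rangeI)
  show "c *s x \<in> support A" if "x \<in> support A" for c x
    using that unfolding support_def by (auto, metis vector_scalar_commute rangeI)
qed

lemma support_eq_span_columns: "support (A::complex^'n^'n) = vec.span (columns A)"
proof
  show "support A \<subseteq> vec.span (columns A)"
  proof
    fix y assume "y \<in> support A"
    then obtain x where "y = A *v x" by (auto simp: support_def)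
    also have "A *v x = (\<Sum>i\<in>UNIV. (x$i) *s column i A)" by (rule matrix_mult_sum)
    also have "\<dots> \<in> vec.span (columns A)"
      by (intro vec.span_sum vec.span_scale vec.span_base) (auto simp: columns_def)
    finally show "y \<in> vec.span (columns A)" .
  qed
  have "column i A = A *v axis i 1" for i
    by (simp add: vec_eq_iff column_def matrix_vector_mult_def axis_def if_distrib sum.delta
        cong: if_cong)
  then show "vec.span (columns A) \<subseteq> support A"
    by (intro vec.span_minimal subspace_support) (auto simp: columns_def support_def)
qed

text \<open>\<open>rank\<close> is the row rank; the rows of a Hermitian matrix are the conjugated columns.\<close>

lemma rank_eq_dim_support:
  assumes "adj A = A" shows "rank (A::complex^'n^'n) = vec.dim (support A)"
proof -
  have "row i (adj A) = vcnj (column i A)" for i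
    by (simp add: vec_eq_iff row_def column_def vcnj_def)
  then have "rows (adj A) = vcnj ` columns A"
    by (auto simp: rows_def columns_def)
  then have "rank A = vec.dim (vcnj ` columns A)"
    using assms by (simp add: row_rank_def_gen)
  then show ?thesis by (simp add: dim_vcnj support_eq_span_columns)
qed

lemma orthogonal_subspaces_decompose:
  fixes S T :: "(complex^'n) set"
  assumes "vec.subspace S" "vec.subspace T" "vec.dim S + vec.dim T = CARD('n)"
    and "\<forall>x\<in>S. \<forall>y\<in>T. cinn x y = 0"
  shows "\<exists>s\<in>S. \<exists>t\<in>T. v = s + t"
proof -
  have "S \<inter> T = {0}"
    using assms(4) vec.subspace_0[OF assms(1)] vec.subspace_0[OF assms(2)] by fastforce
  then have "vec.dim {x + y |x y. x \<in> S \<and> y \<in> T} = vec.dim (UNIV :: (complex^'n) set)"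
    using vec.dim_sums_Int[OF assms(1,2)] assms(3) vec.dim_span[of "{}"]
    by (simp add: card_cart_basis)
  then have "{x + y |x y. x \<in> S \<and> y \<in> T} = UNIV"
    using vec.subspace_dim_equal[OF vec.subspace_sums[OF assms(1,2)] vec.subspace_UNIV] by simp
  then show ?thesis by blast
qed

lemma orth_proj_onto_fixes: "orth_proj_onto Q S \<Longrightarrow> s \<in> S \<Longrightarrow> Q *v s = s"
  unfolding orth_proj_onto_def support_def by (auto simp: matrix_vector_mul_assoc)

lemma orth_proj_onto_range: "orth_proj_onto Q S \<Longrightarrow> Q *v v \<in> S"
  by (auto simp: orth_proj_onto_def support_def)

lemma orth_proj_onto_orthogonal:
  assumes "orth_proj_onto Q S" "\<forall>s\<in>S. cinn s t = 0" shows "Q *v t = 0"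
proof -
  have "cinn (Q *v t) (Q *v t) = cinn t (Q *v t)"
    using assms(1) by (simp add: cinn_adj orth_proj_onto_def matrix_vector_mul_assoc)
  also have "\<dots> = 0"
    using assms orth_proj_onto_range[OF assms(1)] cinn_cnj[of "Q *v t" t] by simp
  finally show ?thesis by simp
qed

lemma orth_proj_onto_unique:
  assumes "orth_proj_onto P S" "orth_proj_onto Q S" shows "P = Q"
proof -
  have PQ: "P ** Q = Q" and QP: "Q ** P = P"
    using assms by (simp_all add: matrix_eq matrix_vector_mul_assoc[symmetric]
        orth_proj_onto_fixes orth_proj_onto_range)
  have "P = adj (Q ** P)" using QP assms(1) by (simp add: orth_proj_onto_def)
  also have "\<dots> = P ** Q" using assms by (simp add: orth_proj_onto_def adj_mult)
  finally show ?thesis using PQ by simp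
qed

lemma psd_mat_1_minus_proj:
  assumes "orth_proj_onto Q S" shows "psd (mat 1 - Q)"
proof -
  have aQ: "adj Q = Q" and QQ: "Q ** Q = Q" using assms by (auto simp: orth_proj_onto_def)
  have "cinn w ((mat 1 - Q) *v w) = cinn ((mat 1 - Q) *v w) ((mat 1 - Q) *v w)" for w
  proof -
    have "cinn (Q *v w) w = cinn w (Q *v w)" using aQ cinn_adj[of w Q w] by simp
    moreover have "cinn (Q *v w) (Q *v w) = cinn w (Q *v w)"
      using aQ QQ cinn_adj[of w Q "Q *v w"] by (simp add: matrix_vector_mul_assoc)
    ultimately show ?thesis
      by (simp add: matrix_vector_mult_diff_rdistrib cinn_diff_left cinn_diff_right)
  qed
  then show ?thesis unfolding psd_def by (simp add: cinn_self)
qed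

lemma span2_iff: "y \<in> vec.span {x, x'} \<longleftrightarrow> (\<exists>l m. y = l *s x + m *s x')"
proof
  assume "y \<in> vec.span {x, x'}"
  then obtain k m where "y - k *s x = m *s x'"
    by (auto simp: vec.span_breakdown_eq vec.span_singleton)
  then have "y = k *s x + m *s x'" by (simp add: algebra_simps)
  then show "\<exists>l m. y = l *s x + m *s x'" by blast
next
  assume "\<exists>l m. y = l *s x + m *s x'"
  then obtain l m where "y = l *s x + m *s x'" by blast
  then have "y - l *s x = m *s x'" by simp
  then show "y \<in> vec.span {x, x'}" by (auto simp: vec.span_breakdown_eq vec.span_singleton)
qed

lemma fixes_span2:
  assumes "M *v x = x" "M *v x' = x'" "y \<in> vec.span {x, x'}"
  shows "(M::complex^'n^'n) *v y = y"
  using assms by (auto simp: span2_iff matrix_vector_right_distrib vector_scalar_commute)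

lemma support_eqI:
  assumes "\<And>v. P *v v \<in> S" "\<And>s. s \<in> S \<Longrightarrow> P *v s = s" shows "support P = S"
proof
  show "support P \<subseteq> S" using assms(1) by (auto simp: support_def)
  show "S \<subseteq> support P"
  proof
    fix s assume "s \<in> S"
    then have "s = P *v s" using assms(2) by simp
    then show "s \<in> support P" unfolding support_def by (rule image_eqI) simp
  qed
qed

lemma orth_proj_onto_outer_orthonormal:
  assumes "cinn e e = 1" "cinn e' e' = 1" "cinn e e' = 0"
  shows "orth_proj_onto (outer e + outer e') (vec.span {e, e'})"
proof -
  let ?Q = "outer e + outer e'"
  have Qv: "?Q *v v = cinn e v *s e + cinn e' v *s e'" for v
    by (simp add: matrix_vector_mult_add_rdistrib outer_mult_vec)
  have "cinn e' e = 0" using assms(3) cinn_cnj[of e e'] by simp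
  then have fixed: "?Q *v e = e" "?Q *v e' = e'" using assms by (simp_all add: Qv)
  have range: "?Q *v v \<in> vec.span {e, e'}" for v
    unfolding Qv span2_iff by blast
  have "?Q ** ?Q = ?Q"
    by (simp add: matrix_eq matrix_vector_mul_assoc[symmetric] fixes_span2[OF fixed range])
  moreover have "support ?Q = vec.span {e, e'}"
    using range fixes_span2[OF fixed] by (rule support_eqI)
  ultimately show ?thesis by (simp add: orth_proj_onto_def adj_add)
qed

lemma cinn_self_normalize:
  assumes "v \<noteq> 0"
  shows "cinn (complex_of_real (1 / norm v) *s v) (complex_of_real (1 / norm v) *s v) = 1"
  using assms by (simp add: cinn_scale_left cinn_scale_right cinn_self[of v] power2_eq_square)

lemma orthonormal_pair_spanning:
  assumes "x \<noteq> 0" "y \<notin> vec.span {x}"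
  obtains e e' where "cinn e e = 1" "cinn e' e' = 1" "cinn e e' = 0"
    "vec.span {e, e'} = vec.span {x, y}"
proof -
  define e where "e = complex_of_real (1 / norm x) *s x"
  define v where "v = y - cinn e y *s e"
  define e' where "e' = complex_of_real (1 / norm v) *s v"
  have e: "cinn e e = 1" using cinn_self_normalize assms(1) by (simp add: e_def)
  have xe: "x = complex_of_real (norm x) *s e"
    using assms(1) by (simp add: e_def vector_smult_assoc)
  have "v \<noteq> 0"
  proof
    assume "v = 0"
    then have "y = (cinn e y * complex_of_real (1 / norm x)) *s x"
      by (simp add: v_def e_def vector_smult_assoc)
    then show False using assms(2) by (metis vec.span_base vec.span_scale singletonI)
  qed
  then have e': "cinn e' e' = 1" and ve': "v = complex_of_real (norm v) *s e'"
    using cinn_self_normalize by (simp_all add: e'_def vector_smult_assoc)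
  have "cinn e e' = 0"
    using e by (simp add: e'_def v_def cinn_scale_right cinn_diff_right cinn_scale_right)
  moreover have "vec.span {e, e'} = vec.span {x, y}"
  proof (rule vec.span_eq[THEN iffD2], rule conjI)
    have e_in: "e \<in> vec.span {x, y}"
      unfolding e_def by (intro vec.span_scale vec.span_base) simp
    then have "v \<in> vec.span {x, y}"
      using vec.span_diff[OF vec.span_base[of y "{x, y}"] vec.span_scale[OF e_in]] by (simp add: v_def)
    then show "{e, e'} \<subseteq> vec.span {x, y}"
      using e_in unfolding e'_def by (simp add: vec.span_scale)
    have "x = complex_of_real (norm x) *s e + 0 *s e'"
      "y = cinn e y *s e + complex_of_real (norm v) *s e'"
      using xe ve' by (simp_all add: v_def)
    then have "x \<in> vec.span {e, e'}" "y \<in> vec.span {e, e'}"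
      unfolding span2_iff by blast+
    then show "{x, y} \<subseteq> vec.span {e, e'}" by simp
  qed
  ultimately show ?thesis using that e e' by blast
qed

lemma dim2_subspace_spanned_pair:
  assumes "vec.subspace S" "vec.dim S = 2" "V \<subseteq> S" "S \<subseteq> vec.span V"
  obtains x y where "x \<in> V" "y \<in> V" "x \<noteq> 0" "y \<notin> vec.span {x}" "vec.span {x, y} = S"
proof -
  obtain B where B: "B \<subseteq> V" "vec.independent B" "V \<subseteq> vec.span B" "card B = vec.dim V"
    using vec.basis_exists by blast
  have "vec.span V = S"
    using assms(4) vec.span_minimal[OF assms(3,1)] by blast
  then have "card B = 2" using B(4) assms(2) vec.dim_span[of V] by simp
  then obtain x y where xy: "B = {x, y}" "x \<noteq> y" by (meson card_2_iff)
  have "vec.span B = S"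
    using \<open>vec.span V = S\<close> vec.span_mono[OF B(1)] vec.span_minimal[OF B(3) vec.subspace_span]
    by blast
  moreover have "x \<noteq> 0" using B(2) xy vec.dependent_zero by blast
  moreover have "vec.independent (insert y {x})" using B(2) xy by (simp add: insert_commute)
  then have "y \<notin> vec.span {x}" using xy(2) by (simp add: vec.independent_insert)
  ultimately show ?thesis using that B(1) xy by blast
qed

lemma orth_proj_onto_dim2_exists:
  assumes "vec.subspace S" "vec.dim S = 2" obtains Q where "orth_proj_onto Q S"
proof -
  obtain x y where "x \<noteq> 0" "y \<notin> vec.span {x}" "vec.span {x, y} = S"
    using dim2_subspace_spanned_pair[OF assms subset_refl vec.span_superset] .
  then show ?thesis
    by (metis orthonormal_pair_spanning orth_proj_onto_outer_orthonormal that)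
qed

section \<open>Separable projectors onto two-dimensional subspaces\<close>

lemma separable_proj_decomp:
  assumes "orth_proj_onto Q S" "separable Q"
  obtains n c a b where
    "\<forall>k<(n::nat). 0 \<le> c k \<and> cinn (a k) (a k) = 1 \<and> cinn (b k) (b k) = 1 \<and>
                  (c k \<noteq> 0 \<longrightarrow> tensor_vec (a k) (b k) \<in> S)"
    "Q = (\<Sum>k<n. c k *\<^sub>R outer (tensor_vec (a k) (b k :: qvec) :: qqvec))"
proof -
  obtain n c a b where h: "\<forall>k<(n::nat). 0 \<le> c k \<and> cinn (a k) (a k) = 1 \<and> cinn (b k) (b k) = 1"
    and Q: "Q = (\<Sum>k<n. c k *\<^sub>R outer (tensor_vec (a k) (b k :: qvec) :: qqvec))"
    using separable_decomp[OF assms(2)] by blast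
  have "Q ** (mat 1 - Q) = 0"
    using assms(1) by (simp add: orth_proj_onto_def matrix_eq matrix_vector_mult_diff_rdistrib
        matrix_vector_mult_diff_distrib matrix_vector_mul_assoc[symmetric])
  then have "(mat 1 - Q) *v tensor_vec (a k) (b k) = 0" if "k < n" "c k \<noteq> 0" for k
    using psd_sum_outer_trace_eq_0[of n c "mat 1 - Q" "\<lambda>k. tensor_vec (a k) (b k)" k]
      psd_mat_1_minus_proj[OF assms(1)] h Q that
    by (auto simp: mtrace_def)
  then have "tensor_vec (a k) (b k) = Q *v tensor_vec (a k) (b k)" if "k < n" "c k \<noteq> 0" for k
    using that by (simp add: matrix_vector_mult_diff_rdistrib)
  then have "tensor_vec (a k) (b k) \<in> S" if "k < n" "c k \<noteq> 0" for k
    using that orth_proj_onto_range[OF assms(1), of "tensor_vec (a k) (b k)"] by metis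
  then show ?thesis using that h Q by blast
qed

lemma separable_proj_dim2_spanning_products:
  assumes "vec.subspace S" "vec.dim S = 2" "orth_proj_onto Q S" "separable Q"
  obtains a b a' b' :: qvec where "cinn a a = 1" "cinn b b = 1" "cinn a' a' = 1" "cinn b' b' = 1"
    "tensor_vec a' b' \<notin> vec.span {tensor_vec a b}"
    "vec.span {tensor_vec a b, tensor_vec a' b'} = S"
proof -
  obtain n c a b where h: "\<forall>k<(n::nat). 0 \<le> c k \<and> cinn (a k) (a k) = 1 \<and> cinn (b k) (b k) = 1 \<and>
                  (c k \<noteq> 0 \<longrightarrow> tensor_vec (a k) (b k) \<in> S)"
    and Q: "Q = (\<Sum>k<n. c k *\<^sub>R outer (tensor_vec (a k) (b k)))"
    using separable_proj_decomp[OF assms(3,4)] by blast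
  define K where "K = {k. k < n \<and> c k \<noteq> 0}"
  let ?V = "(\<lambda>k. tensor_vec (a k) (b k)) ` K"
  have span: "S \<subseteq> vec.span ?V"
  proof
    fix s assume "s \<in> S"
    then have "s = Q *v s" using orth_proj_onto_fixes[OF assms(3)] by simp
    also have "\<dots> = (\<Sum>k<n. (of_real (c k) * cinn (tensor_vec (a k) (b k)) s) *s tensor_vec (a k) (b k))"
      by (simp add: Q sum_matrix_vector_mult scaleR_matrix_vector_mult outer_mult_vec vector_smult_assoc)
    also have "\<dots> = (\<Sum>k\<in>K. (of_real (c k) * cinn (tensor_vec (a k) (b k)) s) *s tensor_vec (a k) (b k))"
      unfolding K_def by (rule sum.mono_neutral_right) auto
    also have "\<dots> \<in> vec.span ?V"
      by (intro vec.span_sum vec.span_scale vec.span_base) auto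
    finally show "s \<in> vec.span ?V" .
  qed
  have sub: "?V \<subseteq> S" using h by (auto simp: K_def)
  obtain X Y where "X \<in> ?V" "Y \<in> ?V" "X \<noteq> 0" and XY: "Y \<notin> vec.span {X}" "vec.span {X, Y} = S"
    using dim2_subspace_spanned_pair[OF assms(1,2) sub span] .
  then obtain i j where "i \<in> K" "j \<in> K" "X = tensor_vec (a i) (b i)" "Y = tensor_vec (a j) (b j)"
    by blast
  then show ?thesis
    by (intro that[of "a i" "b i" "a j" "b j"]) (use h XY in \<open>auto simp: K_def\<close>)
qed

lemma orth_proj_onto_span2_eqI:
  assumes "orth_proj_onto Q (vec.span {X, X'})" "adj P = P" "P *v X = X" "P *v X' = X'"
    "\<And>v. P *v v \<in> vec.span {X, X'}"
  shows "Q = P"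
proof -
  have "support P = vec.span {X, X'}"
    using assms(5) fixes_span2[OF assms(3,4)] by (rule support_eqI)
  moreover have "P ** P = P"
    by (simp add: matrix_eq matrix_vector_mul_assoc[symmetric] fixes_span2[OF assms(3,4,5)])
  ultimately show ?thesis
    using assms(1,2) by (intro orth_proj_onto_unique) (auto simp: orth_proj_onto_def)
qed

lemma orth_proj_onto_span_products_parallel_left:
  assumes "orth_proj_onto Q (vec.span {tensor_vec a b, tensor_vec (\<sigma> *s a) b'})"
    "cinn a a = 1" "\<sigma> \<noteq> 0" "det2 b b' \<noteq> 0"
  shows "Q = tensor (outer a) (mat 1)"
proof (rule orth_proj_onto_span2_eqI[OF assms(1)])
  show "adj (tensor (outer a) (mat 1)) = tensor (outer a) (mat 1)"
    by (simp add: adj_tensor vec_eq_iff mat_def)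
  show "tensor (outer a) (mat 1) *v tensor_vec a b = tensor_vec a b"
    "tensor (outer a) (mat 1) *v tensor_vec (\<sigma> *s a) b' = tensor_vec (\<sigma> *s a) b'"
    using assms(2) by (simp_all add: tensor_mult_tensor_vec outer_mult_vec cinn_scale_right)
  fix v
  obtain l m where "(\<chi> j. \<Sum>i\<in>UNIV. cnj (a$i) * v$(i,j)) = l *s b + m *s b'"
    using det2_neq_0_span[OF assms(4)] .
  then have "tensor (outer a) (mat 1) *v v = l *s tensor_vec a b + (m / \<sigma>) *s tensor_vec (\<sigma> *s a) b'"
    using assms(3) by (simp add: tensor_outer_mat_1_mult_vec tensor_vec_add_right tensor_vec_scale_left
        tensor_vec_scale_right vector_smult_assoc)
  then show "tensor (outer a) (mat 1) *v v \<in> vec.span {tensor_vec a b, tensor_vec (\<sigma> *s a) b'}"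
    unfolding span2_iff by blast
qed

lemma orth_proj_onto_span_products_parallel_right:
  assumes "orth_proj_onto Q (vec.span {tensor_vec a b, tensor_vec a' (\<sigma> *s b)})"
    "cinn b b = 1" "\<sigma> \<noteq> 0" "det2 a a' \<noteq> 0"
  shows "Q = tensor (mat 1) (outer b)"
proof (rule orth_proj_onto_span2_eqI[OF assms(1)])
  show "adj (tensor (mat 1) (outer b)) = tensor (mat 1) (outer b)"
    by (simp add: adj_tensor vec_eq_iff mat_def)
  show "tensor (mat 1) (outer b) *v tensor_vec a b = tensor_vec a b"
    "tensor (mat 1) (outer b) *v tensor_vec a' (\<sigma> *s b) = tensor_vec a' (\<sigma> *s b)"
    using assms(2) by (simp_all add: tensor_mult_tensor_vec outer_mult_vec cinn_scale_right)
  fix v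
  obtain l m where "(\<chi> i. \<Sum>j\<in>UNIV. cnj (b$j) * v$(i,j)) = l *s a + m *s a'"
    using det2_neq_0_span[OF assms(4)] .
  then have "tensor (mat 1) (outer b) *v v = l *s tensor_vec a b + (m / \<sigma>) *s tensor_vec a' (\<sigma> *s b)"
    using assms(3) by (simp add: tensor_mat_1_outer_mult_vec tensor_vec_add_left tensor_vec_scale_left
        tensor_vec_scale_right vector_smult_assoc)
  then show "tensor (mat 1) (outer b) *v v \<in> vec.span {tensor_vec a b, tensor_vec a' (\<sigma> *s b)}"
    unfolding span2_iff by blast
qed

text \<open>Take \<open>z \<perp> X\<close> and \<open>w \<perp> X'\<close> in the span. Every \<open>|x\<^sub>k\<rangle>\<langle>x\<^sub>k|\<close> annihilates \<open>\<langle>z|\<cdot>|w\<rangle>\<close>,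
  hence so does \<open>Q\<close>, which fixes \<open>w\<close>; but \<open>\<langle>z, w\<rangle> = -\<langle>X', X\<rangle>\<parallel>z\<parallel>\<^sup>2\<close>.\<close>

lemma orth_proj_onto_parallel_decomp_orthogonal:
  assumes "orth_proj_onto Q (vec.span {X, X'})" "Q = (\<Sum>k<n. c k *\<^sub>R outer (x k))"
    "\<forall>k<n. c k \<noteq> 0 \<longrightarrow> x k \<in> vec.span {X} \<or> x k \<in> vec.span {X'}"
    "cinn X X = 1" "cinn X' X' = 1" "X' \<notin> vec.span {X}"
  shows "cinn X X' = 0"
proof -
  define z where "z = X' - cinn X X' *s X"
  define w where "w = X - cinn X' X *s X'"
  have zX: "cinn z X = 0"
    using assms(4) by (simp add: z_def cinn_diff_left cinn_scale_left cinn_cnj)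
  have X'w: "cinn X' w = 0"
    using assms(5) by (simp add: w_def cinn_diff_right cinn_scale_right)
  have vanish: "of_real (c k) * (cinn (x k) w * cinn z (x k)) = 0" if "k < n" for k
    using assms(3) that zX X'w
    by (cases "c k = 0") (auto simp: vec.span_singleton cinn_scale_left cinn_scale_right)
  have "cinn z (Q *v w) = (\<Sum>k<n. of_real (c k) * (cinn (x k) w * cinn z (x k)))"
    by (simp add: assms(2) sum_matrix_vector_mult scaleR_matrix_vector_mult outer_mult_vec
        cinn_sum_right cinn_scale_right mult_ac)
  also have "\<dots> = 0" by (rule sum.neutral) (simp add: vanish)
  moreover have "w \<in> vec.span {X, X'}"
    unfolding span2_iff w_def by (rule exI[of _ 1], rule exI[of _ "- cinn X' X"]) simp
  then have "Q *v w = w" by (rule orth_proj_onto_fixes[OF assms(1)])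
  moreover have "cinn z w = - (cinn X' X * cinn z z)"
    using zX by (simp add: z_def w_def cinn_diff_left cinn_diff_right cinn_scale_left
        cinn_scale_right algebra_simps)
  moreover have "z \<noteq> 0"
    using assms(6) by (auto simp: z_def vec.span_singleton)
  ultimately show ?thesis using cinn_cnj[of X' X] by simp
qed

lemma separable_proj_span_products_orthogonal:
  assumes "orth_proj_onto Q (vec.span {tensor_vec a b, tensor_vec a' b'})" "separable Q"
    "cinn a a = 1" "cinn b b = 1" "cinn a' a' = 1" "cinn b' b' = 1"
    "tensor_vec a' b' \<notin> vec.span {tensor_vec a b}" "det2 a a' \<noteq> 0" "det2 b b' \<noteq> 0"
  shows "cinn a a' * cinn b b' = 0"
proof -
  obtain n c p q where h: "\<forall>k<(n::nat). 0 \<le> c k \<and> cinn (p k) (p k) = 1 \<and> cinn (q k) (q k) = 1 \<and>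
      (c k \<noteq> 0 \<longrightarrow> tensor_vec (p k) (q k) \<in> vec.span {tensor_vec a b, tensor_vec a' b'})"
    and Q: "Q = (\<Sum>k<n. c k *\<^sub>R outer (tensor_vec (p k) (q k)))"
    using separable_proj_decomp[OF assms(1,2)] by blast
  have "\<forall>k<n. c k \<noteq> 0 \<longrightarrow> tensor_vec (p k) (q k) \<in> vec.span {tensor_vec a b}
      \<or> tensor_vec (p k) (q k) \<in> vec.span {tensor_vec a' b'}"
    using h tensor_vec_in_span2_parallel[OF _ assms(8,9)]
    by (fastforce simp: span2_iff vec.span_singleton)
  then have "cinn (tensor_vec a b) (tensor_vec a' b') = 0"
    using assms(1,3-7) Q by (intro orth_proj_onto_parallel_decomp_orthogonal) (auto simp: cinn_tensor_vec)
  then show ?thesis by (simp add: cinn_tensor_vec)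
qed

lemma tensor_vec_pair_cases:
  fixes a b a' b' :: qvec
  assumes "cinn a a = 1" "cinn b b = 1" "cinn a' a' = 1" "cinn b' b' = 1"
    and indep: "tensor_vec a' b' \<notin> vec.span {tensor_vec a b}"
  obtains (left) \<sigma> where "a' = \<sigma> *s a" "\<sigma> \<noteq> 0" "det2 b b' \<noteq> 0"
    | (right) \<tau> where "b' = \<tau> *s b" "\<tau> \<noteq> 0" "det2 a a' \<noteq> 0"
    | (generic) "det2 a a' \<noteq> 0" "det2 b b' \<noteq> 0"
proof -
  have not_both: False if "a' = \<sigma> *s a" "b' = \<tau> *s b" for \<sigma> \<tau>
  proof -
    have "tensor_vec a' b' = (\<sigma> * \<tau>) *s tensor_vec a b"
      using that by (simp add: tensor_vec_scale_left tensor_vec_scale_right vector_smult_assoc)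
    also have "\<dots> \<in> vec.span {tensor_vec a b}" by (intro vec.span_scale vec.span_base) simp
    finally show False using indep by simp
  qed
  have nonzero: "\<sigma> \<noteq> 0" if "cinn (\<sigma> *s v) (\<sigma> *s v) = 1" for \<sigma> and v :: qvec
    using that by auto
  show ?thesis
  proof (cases "det2 a a' = 0")
    case True
    then obtain \<sigma> where "a' = \<sigma> *s a" using det2_eq_0_imp_parallel[OF assms(1)] by blast
    moreover have "det2 b b' \<noteq> 0"
      using not_both calculation det2_eq_0_imp_parallel[OF assms(2), of b'] by blast
    ultimately show ?thesis using left nonzero assms(3) by blast
  next
    case False
    show ?thesis
    proof (cases "det2 b b' = 0")
      case True
      then obtain \<tau> where "b' = \<tau> *s b" using det2_eq_0_imp_parallel[OF assms(2)] by blast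
      then show ?thesis using right nonzero assms(4) False by blast
    qed (use False generic in blast)
  qed
qed

lemma separable_proj_dim2_locc:
  assumes "vec.subspace S" "vec.dim S = 2" "orth_proj_onto Q S" "separable Q"
  shows "locc_povm2 Q (mat 1 - Q)"
proof -
  obtain a b a' b' where unit: "cinn a a = 1" "cinn b b = 1" "cinn a' a' = 1" "cinn b' b' = 1"
    and indep: "tensor_vec a' b' \<notin> vec.span {tensor_vec a b}"
    and S: "vec.span {tensor_vec a b, tensor_vec a' b'} = S"
    using separable_proj_dim2_spanning_products[OF assms] .
  note Q = assms(3)[folded S]
  from unit indep show ?thesis
  proof (cases rule: tensor_vec_pair_cases)
    case (left \<sigma>)
    then show ?thesis using orth_proj_onto_span_products_parallel_left[OF Q[unfolded left(1)]] unit
      by (simp add: locc_povm2_outer_tensor_left)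
  next
    case (right \<tau>)
    then show ?thesis using orth_proj_onto_span_products_parallel_right[OF Q[unfolded right(1)]] unit
      by (simp add: locc_povm2_outer_tensor_right)
  next
    case generic
    then have "cinn a a' * cinn b b' = 0"
      using separable_proj_span_products_orthogonal[OF Q assms(4) unit indep] by blast
    moreover have "Q = outer (tensor_vec a b) + outer (tensor_vec a' b')"
      using calculation unit
      by (intro orth_proj_onto_unique[OF Q] orth_proj_onto_outer_orthonormal)
        (auto simp: cinn_tensor_vec)
    ultimately show ?thesis
      using unit locc_povm2_orthogonal_left locc_povm2_orthogonal_right by auto
  qed
qed

section \<open>Perfect discrimination\<close>

lemma separable_trace_eq_0_kills_support:
  assumes "separable P" "psd \<rho>" "mtrace (P ** \<rho>) = 0" "t \<in> support \<rho>"
  shows "P *v t = 0"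
proof -
  have "P ** \<rho> = adj (\<rho> ** P)"
    using psd_hermitian[OF separable_imp_psd[OF assms(1)]] psd_hermitian[OF assms(2)]
    by (simp add: adj_mult)
  also have "\<dots> = 0"
    using separable_trace_eq_0_imp_mult_eq_0[OF assms(1-3)] by (simp add: vec_eq_iff)
  finally have "P ** \<rho> = 0" .
  then show ?thesis using assms(4) by (auto simp: support_def matrix_vector_mul_assoc)
qed

lemma complement_kills_imp_eq_orth_proj:
  assumes "P + P' = mat 1" "\<forall>s\<in>S. P' *v s = 0" "\<forall>t\<in>T. P *v t = 0" "orth_proj_onto Q S"
    "\<forall>s\<in>S. \<forall>t\<in>T. cinn s t = 0" "\<forall>v. \<exists>s\<in>S. \<exists>t\<in>T. v = s + t"
  shows "P = Q"
proof -
  have "P *v v = Q *v v" for v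
  proof -
    obtain s t where "s \<in> S" "t \<in> T" "v = s + t" using assms(6) by blast
    moreover have "P = mat 1 - P'" using assms(1) by (simp add: eq_diff_eq)
    then have "P *v s = s"
      using assms(2) \<open>s \<in> S\<close> by (simp add: matrix_vector_mult_diff_rdistrib)
    ultimately show ?thesis
      using assms(3,5) orth_proj_onto_fixes[OF assms(4)] orth_proj_onto_orthogonal[OF assms(4)]
      by (simp add: matrix_vector_right_distrib)
  qed
  then show ?thesis by (simp add: matrix_eq)
qed

lemma sep_povm2_perfectly_distinguishes_eq_orth_projs:
  assumes "psd \<rho>1" "psd \<rho>2" "vec.dim (support \<rho>1) = 2" "vec.dim (support \<rho>2) = 2"
    and orth: "\<forall>x\<in>support \<rho>1. \<forall>y\<in>support \<rho>2. cinn x y = 0"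
    and "sep_povm2 P1 P2" "perfectly_distinguishes P1 P2 \<rho>1 \<rho>2"
    and "orth_proj_onto Q1 (support \<rho>1)" "orth_proj_onto Q2 (support \<rho>2)"
  shows "P1 = Q1" "P2 = Q2"
proof -
  have dec: "\<forall>v. \<exists>s\<in>support \<rho>1. \<exists>t\<in>support \<rho>2. v = s + t"
    using orthogonal_subspaces_decompose[OF subspace_support subspace_support _ orth] assms(3,4)
    by simp
  then have dec': "\<forall>v. \<exists>t\<in>support \<rho>2. \<exists>s\<in>support \<rho>1. v = t + s"
    by (metis add.commute)
  have orth': "\<forall>y\<in>support \<rho>2. \<forall>x\<in>support \<rho>1. cinn y x = 0"
  proof (intro ballI)
    fix y x assume "y \<in> support \<rho>2" "x \<in> support \<rho>1"
    then have "cinn x y = 0" using orth by blast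
    then show "cinn y x = 0" using cinn_cnj[of x y] by simp
  qed
  have sum: "P1 + P2 = mat 1" "P2 + P1 = mat 1"
    using assms(6) by (simp_all add: sep_povm2_def povm2_def add.commute)
  have kills: "\<forall>t\<in>support \<rho>2. P1 *v t = 0" "\<forall>s\<in>support \<rho>1. P2 *v s = 0"
    using assms(1,2,6,7) separable_trace_eq_0_kills_support
    by (auto simp: sep_povm2_def perfectly_distinguishes_def)
  show "P1 = Q1"
    using complement_kills_imp_eq_orth_proj[OF sum(1) kills(2) kills(1) assms(8) orth dec] .
  show "P2 = Q2"
    using complement_kills_imp_eq_orth_proj[OF sum(2) kills(1) kills(2) assms(9) orth' dec'] .
qed

lemma orth_proj_perfectly_distinguishes:
  assumes "density \<rho>1" "density \<rho>2" "orth_proj_onto Q (support \<rho>1)"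
    "\<forall>x\<in>support \<rho>1. \<forall>y\<in>support \<rho>2. cinn x y = 0"
  shows "perfectly_distinguishes Q (mat 1 - Q) \<rho>1 \<rho>2"
proof -
  have "Q ** \<rho>1 = \<rho>1"
    using orth_proj_onto_fixes[OF assms(3)]
    by (simp add: matrix_eq matrix_vector_mul_assoc[symmetric] support_def)
  moreover have "Q ** \<rho>2 = 0"
    using orth_proj_onto_orthogonal[OF assms(3)] assms(4)
    by (simp add: matrix_eq matrix_vector_mul_assoc[symmetric] support_def)
  moreover have "(mat 1 - Q) ** \<rho> = \<rho> - Q ** \<rho>" for \<rho> :: qqop
    by (simp add: matrix_eq matrix_vector_mul_assoc[symmetric] matrix_vector_mult_diff_rdistrib)
  ultimately show ?thesis
    using assms(1,2) by (simp add: perfectly_distinguishes_def density_def mtrace_def sum_subtractf)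
qed

theorem mainTheorem2:
  fixes \<rho>1 \<rho>2 :: qqop
  assumes "density \<rho>1" and "density \<rho>2"
    and "rank \<rho>1 = 2" and "rank \<rho>2 = 2"
    and "\<forall>x\<in>support \<rho>1. \<forall>y\<in>support \<rho>2. cinn x y = 0"
  shows "((\<exists>P1 P2. sep_povm2 P1 P2 \<and> perfectly_distinguishes P1 P2 \<rho>1 \<rho>2)
            \<longleftrightarrow> (\<exists>P1 P2. locc_povm2 P1 P2 \<and> perfectly_distinguishes P1 P2 \<rho>1 \<rho>2))
       \<and> ((\<exists>P1 P2. locc_povm2 P1 P2 \<and> perfectly_distinguishes P1 P2 \<rho>1 \<rho>2)
            \<longleftrightarrow> (\<forall>Q1 Q2. orth_proj_onto Q1 (support \<rho>1) \<longrightarrow> orth_proj_onto Q2 (support \<rho>2)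
                   \<longrightarrow> separable Q1 \<and> separable Q2))"
    (is "(?sep \<longleftrightarrow> ?locc) \<and> (?locc \<longleftrightarrow> ?proj)")
proof -
  have psd: "psd \<rho>1" "psd \<rho>2" using assms(1,2) by (simp_all add: density_def)
  then have dim: "vec.dim (support \<rho>1) = 2" "vec.dim (support \<rho>2) = 2"
    using assms(3,4) by (simp_all add: rank_eq_dim_support psd_hermitian)
  have "?sep \<Longrightarrow> ?proj"
    using sep_povm2_perfectly_distinguishes_eq_orth_projs[OF psd dim assms(5)]
    unfolding sep_povm2_def by blast
  moreover have "?proj \<Longrightarrow> ?locc"
  proof -
    assume proj: ?proj
    obtain Q1 where Q1: "orth_proj_onto Q1 (support \<rho>1)"
      using orth_proj_onto_dim2_exists[OF subspace_support dim(1)] .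
    obtain Q2 where "orth_proj_onto Q2 (support \<rho>2)"
      using orth_proj_onto_dim2_exists[OF subspace_support dim(2)] .
    then have "locc_povm2 Q1 (mat 1 - Q1)"
      using proj Q1 separable_proj_dim2_locc[OF subspace_support dim(1) Q1] by blast
    then show ?locc using orth_proj_perfectly_distinguishes[OF assms(1,2) Q1 assms(5)] by blast
  qed
  moreover have "?locc \<Longrightarrow> ?sep" using locc_povm2_imp_sep_povm2 by blast
  ultimately show ?thesis by blast
qed

end
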